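(* Let $k\geq 2$ and $1\leq i\leq k-1$ be integers, and for each $1\leq j\leq i-1$ let $S_j$ be any triangle-free $(k-j)$-critical graph without isolated vertices. Let $U=U(S_1,\dots,S_{i-1})$ (for $i=1$, $U$ is a single vertex, which is active). Then: (1) For every active vertex $u$ of $U$, $U$ can be properly $(k-1)$-colored so that at most $i$ different colors appear at active vertices, and among active vertices one of these colors (the $i$th) appears only at $u$. (2) In any proper $(k-1)$-coloring of $U$, at least $i$ different colors occur as colors of active vertices. (3) If any edge is removed from $U$, the resulting graph can be properly $(k-1)$-colored so that at most $i-1$ colors occur at active vertices.
   Context: A graph is $r$-critical if it has chromatic number $r$ and removing any edge allows it to be properly $(r-1)$-colored. Given graphs $S_1,\dots,S_t$, the graph $U(S_1,\dots,S_t)$ is constructed as follows: take the disjoint union of the graphs $S_1,\dots,S_t$ together with a new independent set $A=\prod_{m=1}^t V(S_m)$ (the set of active vertices; its elements are $t$-tuples), and for each $m$ join each vertex $v\in V(S_m)$ to every $u\in A$ whose $m$th coordinate equals $v$. (Edges inside each $S_m$ are kept.) In the paper this graph, with $S_j$ triangle-free $(k-j)$-critical, is denoted $U^{k-1}_{k-i+1}=U(k-1,k-2,\dots,k-i+1)$. *)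

theory Defs
  imports Main "HOL-Library.FuncSet"
begin

type_synonym 'a graph = "'a set \<times> 'a set set"

definition verts :: "'a graph \<Rightarrow> 'a set" where "verts G = fst G"
definition edges :: "'a graph \<Rightarrow> 'a set set" where "edges G = snd G"

definition is_graph :: "'a graph \<Rightarrow> bool" where
  "is_graph G \<longleftrightarrow> finite (verts G) \<and> (\<forall>e\<in>edges G. e \<subseteq> verts G \<and> card e = 2)"

definition proper_coloring :: "'a graph \<Rightarrow> nat \<Rightarrow> ('a \<Rightarrow> nat) \<Rightarrow> bool" where
  "proper_coloring G r c \<longleftrightarrow> (\<forall>v\<in>verts G. c v < r) \<and>
     (\<forall>x y. {x, y} \<in> edges G \<longrightarrow> x \<noteq> y \<longrightarrow> c x \<noteq> c y)"

definition colorable :: "'a graph \<Rightarrow> nat \<Rightarrow> bool" where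
  "colorable G r \<longleftrightarrow> (\<exists>c. proper_coloring G r c)"

definition chromatic_number :: "'a graph \<Rightarrow> nat" where
  "chromatic_number G = (LEAST r. colorable G r)"

definition delete_edge :: "'a graph \<Rightarrow> 'a set \<Rightarrow> 'a graph" where
  "delete_edge G e = (verts G, edges G - {e})"

definition critical :: "'a graph \<Rightarrow> nat \<Rightarrow> bool" where
  "critical G r \<longleftrightarrow> chromatic_number G = r \<and>
     (\<forall>e\<in>edges G. colorable (delete_edge G e) (r - 1))"

definition triangle_free :: "'a graph \<Rightarrow> bool" where
  "triangle_free G \<longleftrightarrow> \<not> (\<exists>x y z. {x, y} \<in> edges G \<and> {y, z} \<in> edges G \<and> {x, z} \<in> edges G
                                \<and> x \<noteq> y \<and> y \<noteq> z \<and> x \<noteq> z)"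

definition no_isolated :: "'a graph \<Rightarrow> bool" where
  "no_isolated G \<longleftrightarrow> (\<forall>v\<in>verts G. \<exists>e\<in>edges G. v \<in> e)"

text \<open>Vertices of U(S_1,...,S_t): copies of vertices of S_m (tagged by m), and active
  vertices which are t-tuples, represented as extensional functions on {1..t}.\<close>
datatype 'a uvert = Base nat 'a | Act "nat \<Rightarrow> 'a"

definition active_tuples :: "nat \<Rightarrow> (nat \<Rightarrow> 'a graph) \<Rightarrow> (nat \<Rightarrow> 'a) set" where
  "active_tuples t S = (\<Pi>\<^sub>E m\<in>{1..t}. verts (S m))"

definition U_active :: "nat \<Rightarrow> (nat \<Rightarrow> 'a graph) \<Rightarrow> 'a uvert set" where
  "U_active t S = Act ` active_tuples t S"

definition U_graph :: "nat \<Rightarrow> (nat \<Rightarrow> 'a graph) \<Rightarrow> 'a uvert graph" where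
  "U_graph t S =
    ({Base m v | m v. m \<in> {1..t} \<and> v \<in> verts (S m)} \<union> U_active t S,
     {{Base m x, Base m y} | m x y. m \<in> {1..t} \<and> {x, y} \<in> edges (S m)} \<union>
     {{Base m (f m), Act f} | m f. m \<in> {1..t} \<and> f \<in> active_tuples t S})"

end

theory Submission
  imports Defs
begin

text \<open>Colour each \<open>S j\<close> properly with colours from \<open>{j - 1..<k - 1}\<close> (a staircase
  colouring) and give every active vertex the least colour missing among its neighbours. That colour
  is at most \<open>t = i - 1\<close>, and it equals \<open>t\<close> only if every neighbour \<open>Base j (f j)\<close> has
  colour \<open>j - 1\<close>. Criticality lets colour \<open>j - 1\<close> be given to exactly one prescribed vertex of
  \<open>S j\<close> (part (1); for a deleted active edge, the active vertex losing it is then recoloured),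
  or to no vertex of \<open>S m\<close> at all once an edge of \<open>S m\<close> is deleted (part (3)).
  Conversely, if the active vertices used a set \<open>C\<close> of at most \<open>t\<close> colours, each \<open>S j\<close> uses
  at least \<open>k - j\<close> of the \<open>k - 1\<close> colours and so misses fewer than \<open>j\<close> colours of \<open>C\<close>; a greedy
  choice then yields an active vertex whose neighbours show every colour of \<open>C\<close> (part (2)).\<close>

lemma proper_coloring_shift:
  assumes "proper_coloring G r d"
  shows "proper_coloring G (r + s) (\<lambda>v. d v + s)"
  using assms unfolding proper_coloring_def by auto

lemma proper_coloring_delete_edge:
  assumes "proper_coloring G r c"
  shows "proper_coloring (delete_edge G e) r c"
  using assms unfolding proper_coloring_def delete_edge_def verts_def edges_def by auto

lemma proper_coloring_update:
  assumes "proper_coloring G r c" "n < r"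
    and "\<And>y. {x, y} \<in> edges G \<Longrightarrow> y \<noteq> x \<Longrightarrow> c y \<noteq> n"
  shows "proper_coloring G r (c(x := n))"
  unfolding proper_coloring_def
proof (intro conjI allI impI ballI)
  fix v assume "v \<in> verts G"
  then show "(c(x := n)) v < r" using assms(1,2) by (simp add: proper_coloring_def)
next
  fix y z assume yz: "{y, z} \<in> edges G" "y \<noteq> z"
  then show "(c(x := n)) y \<noteq> (c(x := n)) z"
    using assms(1) assms(3)[of y] assms(3)[of z]
    by (auto simp: proper_coloring_def insert_commute)
qed

lemma colorable_card_image:
  assumes "is_graph G" and "\<And>x y. {x, y} \<in> edges G \<Longrightarrow> x \<noteq> y \<Longrightarrow> c x \<noteq> c y"
  shows "colorable G (card (c ` verts G))"
proof -
  have "finite (c ` verts G)" using assms(1) by (simp add: is_graph_def)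
  then obtain g where g: "bij_betw g (c ` verts G) {0..<card (c ` verts G)}"
    using ex_bij_betw_finite_nat by blast
  have "proper_coloring G (card (c ` verts G)) (g \<circ> c)"
    unfolding proper_coloring_def
  proof (intro conjI allI impI ballI)
    fix v assume "v \<in> verts G"
    then show "(g \<circ> c) v < card (c ` verts G)" using g by (auto dest: bij_betwE)
  next
    fix x y assume e: "{x, y} \<in> edges G" "x \<noteq> y"
    then have "x \<in> verts G" "y \<in> verts G" using assms(1) by (auto simp: is_graph_def)
    then show "(g \<circ> c) x \<noteq> (g \<circ> c) y"
      using assms(2)[OF e] g by (auto simp: bij_betw_def inj_on_def)
  qed
  then show ?thesis unfolding colorable_def by blast
qed

lemma chromatic_number_le_card_image:
  assumes "is_graph G" "proper_coloring G r c"
  shows "chromatic_number G \<le> card (c ` verts G)"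
  unfolding chromatic_number_def
  using assms by (intro Least_le colorable_card_image) (auto simp: proper_coloring_def)

lemma colorable_chromatic_number:
  assumes "is_graph G"
  shows "colorable G (chromatic_number G)"
proof -
  have "finite (verts G)" using assms by (simp add: is_graph_def)
  then obtain c :: "_ \<Rightarrow> nat" where c: "inj_on c (verts G)"
    using finite_imp_inj_to_nat_seg by blast
  have "colorable G (card (c ` verts G))"
  proof (rule colorable_card_image[OF assms])
    fix x y assume "{x, y} \<in> edges G" "x \<noteq> y"
    then show "c x \<noteq> c y" using assms c by (auto simp: is_graph_def inj_on_def)
  qed
  then show ?thesis unfolding chromatic_number_def by (rule LeastI)
qed

lemma critical_colorable: "is_graph G \<Longrightarrow> critical G r \<Longrightarrow> colorable G r"
  unfolding critical_def using colorable_chromatic_number by metis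

lemma critical_coloring_pinned:
  assumes "critical G r" "no_isolated G" "v \<in> verts G"
  obtains d where "proper_coloring G r d" "\<forall>w\<in>verts G. d w = 0 \<longleftrightarrow> w = v"
proof -
  obtain e where e: "e \<in> edges G" "v \<in> e" using assms(2,3) unfolding no_isolated_def by blast
  then obtain d where d: "proper_coloring (delete_edge G e) (r - 1) d"
    using assms(1) unfolding critical_def colorable_def by blast
  have "proper_coloring G r (\<lambda>w. if w = v then 0 else d w + 1)"
    unfolding proper_coloring_def
  proof (intro conjI allI impI ballI)
    fix w assume "w \<in> verts G"
    then show "(if w = v then 0 else d w + 1) < r"
      using d by (auto simp: proper_coloring_def delete_edge_def verts_def)
  next
    fix x y assume xy: "{x, y} \<in> edges G" "x \<noteq> y"
    show "(if x = v then 0 else d x + 1) \<noteq> (if y = v then 0 else d y + 1)"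
    proof (cases "v \<in> {x, y}")
      case False
      then have "{x, y} \<in> edges (delete_edge G e)"
        using xy e by (auto simp: delete_edge_def edges_def)
      then show ?thesis using d xy False by (auto simp: proper_coloring_def)
    qed (use xy in auto)
  qed
  then show ?thesis by (rule that) auto
qed

definition mex :: "nat set \<Rightarrow> nat" where
  "mex A = (LEAST n. n \<notin> A)"

lemma mex_notin: "finite A \<Longrightarrow> mex A \<notin> A"
  unfolding mex_def by (rule LeastI_ex) (simp add: ex_new_if_finite)

lemma mex_le: "n \<notin> A \<Longrightarrow> mex A \<le> n"
  unfolding mex_def by (rule Least_le)

lemma mex_lessThan: "mex {..<n} = n"
  unfolding mex_def by (rule Least_equality) auto

lemma mex_staircase_eq:
  assumes "\<forall>j\<in>{1..t}. a j = j - 1"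
  shows "mex (a ` {1..t}) = t"
proof -
  have "a ` {1..t} = {..<t}"
  proof (intro equalityI subsetI)
    fix n assume "n \<in> {..<t}"
    then have "Suc n \<in> {1..t}" "a (Suc n) = n" using assms by auto
    then show "n \<in> a ` {1..t}" by force
  qed (use assms in auto)
  then show ?thesis by (simp add: mex_lessThan)
qed

lemma mex_staircase_less:
  assumes "\<forall>j\<in>{1..t}. j - 1 \<le> a j" "j \<in> {1..t}" "a j \<noteq> j - 1"
  shows "mex (a ` {1..t}) < t"
proof -
  obtain j0 where j0: "j0 \<in> {1..t}" "a j0 \<noteq> j0 - 1"
    and below: "\<forall>j<j0. j \<in> {1..t} \<longrightarrow> a j = j - 1"
    using exists_least_iff[of "\<lambda>j. j \<in> {1..t} \<and> a j \<noteq> j - 1"] assms(2,3) by blast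
  have "j0 - 1 \<notin> a ` {1..t}"
  proof
    assume "j0 - 1 \<in> a ` {1..t}"
    then obtain j where j: "j \<in> {1..t}" "a j = j0 - 1" by auto
    show False
    proof (cases j j0 rule: linorder_cases)
      case less
      then show False using j j0(1) below by auto
    next
      case greater
      have "j - 1 \<le> a j" using assms(1) j(1) by blast
      then show False using greater j j0(1) by auto
    qed (use j j0 in auto)
  qed
  then have "mex (a ` {1..t}) \<le> j0 - 1" by (rule mex_le)
  with j0(1) show ?thesis by auto
qed

lemma mex_staircase_le:
  assumes "\<forall>j\<in>{1..t}. j - 1 \<le> a j"
  shows "mex (a ` {1..t}) \<le> t"
  using assms mex_staircase_eq[of t a] mex_staircase_less[of t a]
  by (cases "\<forall>j\<in>{1..t}. a j = j - 1") force+

lemma proper_coloring_U_graph_iff: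
  "proper_coloring (U_graph t S) r c \<longleftrightarrow>
     (\<forall>j\<in>{1..t}. proper_coloring (S j) r (\<lambda>v. c (Base j v))) \<and>
     (\<forall>f\<in>active_tuples t S. c (Act f) < r \<and> (\<forall>j\<in>{1..t}. c (Base j (f j)) \<noteq> c (Act f)))"
  (is "?lhs \<longleftrightarrow> ?rhs")
proof
  assume c: ?lhs
  have base_edge: "{Base j x, Base j y} \<in> edges (U_graph t S)" if "j \<in> {1..t}" "{x, y} \<in> edges (S j)" for j x y
    using that by (auto simp: U_graph_def edges_def)
  have act_edge: "{Base j (f j), Act f} \<in> edges (U_graph t S)" if "j \<in> {1..t}" "f \<in> active_tuples t S" for j f
    using that by (auto simp: U_graph_def edges_def)
  have base_vert: "Base j v \<in> verts (U_graph t S)" if "j \<in> {1..t}" "v \<in> verts (S j)" for j v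
    using that by (auto simp: U_graph_def verts_def)
  have act_vert: "Act f \<in> verts (U_graph t S)" if "f \<in> active_tuples t S" for f
    using that by (auto simp: U_graph_def U_active_def verts_def)
  show ?rhs
    using c base_edge act_edge base_vert act_vert unfolding proper_coloring_def by fastforce
next
  assume c: ?rhs
  show ?lhs
    unfolding proper_coloring_def
  proof (intro conjI allI impI ballI)
    fix z assume "z \<in> verts (U_graph t S)"
    then show "c z < r"
      using c by (auto simp: U_graph_def U_active_def verts_def proper_coloring_def)
  next
    fix x y assume xy: "{x, y} \<in> edges (U_graph t S)" "x \<noteq> y"
    then consider (base) j a b where "j \<in> {1..t}" "{a, b} \<in> edges (S j)" "{x, y} = {Base j a, Base j b}"
      | (act) j f where "j \<in> {1..t}" "f \<in> active_tuples t S" "{x, y} = {Base j (f j), Act f}"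
      unfolding U_graph_def edges_def by auto
    then show "c x \<noteq> c y"
    proof cases
      case base
      then have "a \<noteq> b" using xy(2) by (auto simp: doubleton_eq_iff)
      then have "c (Base j a) \<noteq> c (Base j b)"
        using c base unfolding proper_coloring_def by blast
      then show ?thesis using base by (auto simp: doubleton_eq_iff)
    next
      case act
      then have "c (Base j (f j)) \<noteq> c (Act f)" using c by blast
      then show ?thesis using act by (auto simp: doubleton_eq_iff)
    qed
  qed
qed

lemma U_graph_Act_neighbour:
  assumes "{Act f, y} \<in> edges (U_graph t S)"
  shows "\<exists>j\<in>{1..t}. y = Base j (f j)"
proof -
  have "{Act f, y} \<noteq> {Base j a, Base j b}" for j a b by auto
  with assms obtain j g where "j \<in> {1..t}" "{Act f, y} = {Base j (g j), Act g}"
    unfolding U_graph_def edges_def by auto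
  then show ?thesis by (auto simp: doubleton_eq_iff)
qed

lemma delete_edge_U_graph_Base_edge:
  "delete_edge (U_graph t S) {Base m x, Base m y} = U_graph t (S(m := delete_edge (S m) {x, y}))"
  (is "_ = U_graph t ?S'")
proof -
  have verts_eq: "verts (?S' j) = verts (S j)" for j
    by (simp add: delete_edge_def verts_def)
  then have act_eq: "active_tuples t ?S' = active_tuples t S"
    by (simp add: active_tuples_def)
  have edges_eq: "{a, b} \<in> edges (?S' j) \<longleftrightarrow> {a, b} \<in> edges (S j) \<and> \<not> (j = m \<and> {a, b} = {x, y})" for j a b
    by (simp add: delete_edge_def edges_def)
  have base_eq: "{Base j a, Base j b} = {Base m x, Base m y} \<longleftrightarrow> j = m \<and> {a, b} = {x, y}" for j a b
    by (auto simp: doubleton_eq_iff)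
  have "{{Base j a, Base j b} | j a b. j \<in> {1..t} \<and> {a, b} \<in> edges (S j)} - {{Base m x, Base m y}}
      = {{Base j a, Base j b} | j a b. j \<in> {1..t} \<and> {a, b} \<in> edges (?S' j)}"
    (is "?B - {?e} = ?B'")
  proof (intro equalityI subsetI)
    fix z assume "z \<in> ?B - {?e}"
    then have "z \<in> ?B" "z \<noteq> ?e" by (simp_all only: Diff_iff singleton_iff not_False_eq_True)
    from this(1) obtain j a b where z: "j \<in> {1..t}" "{a, b} \<in> edges (S j)" "z = {Base j a, Base j b}"
      by blast
    with \<open>z \<noteq> ?e\<close> have "\<not> (j = m \<and> {a, b} = {x, y})" using base_eq[of j a b] by simp
    then show "z \<in> ?B'" using z edges_eq[of a b j] by blast
  next
    fix z assume "z \<in> ?B'"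
    then obtain j a b where z: "j \<in> {1..t}" "{a, b} \<in> edges (?S' j)" "z = {Base j a, Base j b}"
      by blast
    then have "z \<noteq> ?e" using base_eq[of j a b] edges_eq[of a b j] by simp
    then show "z \<in> ?B - {?e}" using z edges_eq[of a b j] by blast
  qed
  moreover have "?e \<notin> {{Base j (f j), Act f} | j f. j \<in> {1..t} \<and> f \<in> active_tuples t S}"
    by auto
  ultimately have "edges (U_graph t S) - {?e} = edges (U_graph t ?S')"
    unfolding U_graph_def edges_def act_eq by (simp only: snd_conv Un_Diff) auto
  moreover have "verts (U_graph t S) = verts (U_graph t ?S')"
    unfolding U_graph_def U_active_def act_eq verts_eq by (simp add: verts_def)
  ultimately show ?thesis
    unfolding delete_edge_def by (simp add: prod_eq_iff verts_def edges_def)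
qed

definition U_coloring :: "nat \<Rightarrow> (nat \<Rightarrow> 'a \<Rightarrow> nat) \<Rightarrow> 'a uvert \<Rightarrow> nat" where
  "U_coloring t b z = (case z of Base j v \<Rightarrow> b j v | Act f \<Rightarrow> mex ((\<lambda>j. b j (f j)) ` {1..t}))"

lemma U_coloring_Base [simp]: "U_coloring t b (Base j v) = b j v"
  by (simp add: U_coloring_def)

lemma U_coloring_Act [simp]: "U_coloring t b (Act f) = mex ((\<lambda>j. b j (f j)) ` {1..t})"
  by (simp add: U_coloring_def)

lemma active_tuple_in_verts: "f \<in> active_tuples t S \<Longrightarrow> j \<in> {1..t} \<Longrightarrow> f j \<in> verts (S j)"
  by (auto simp: active_tuples_def)

lemma proper_coloring_U_coloring:
  assumes "t < r"
    and "\<forall>j\<in>{1..t}. proper_coloring (S j) r (b j)"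
    and "\<forall>j\<in>{1..t}. \<forall>v\<in>verts (S j). j - 1 \<le> b j v"
  shows "proper_coloring (U_graph t S) r (U_coloring t b)"
  unfolding proper_coloring_U_graph_iff
proof (intro conjI ballI)
  fix j assume "j \<in> {1..t}"
  then show "proper_coloring (S j) r (\<lambda>v. U_coloring t b (Base j v))"
    using assms(2) by simp
next
  fix f assume f: "f \<in> active_tuples t S"
  have "\<forall>j\<in>{1..t}. j - 1 \<le> b j (f j)"
    using assms(3) active_tuple_in_verts[OF f] by blast
  then show "U_coloring t b (Act f) < r"
    using mex_staircase_le[of t "\<lambda>j. b j (f j)"] assms(1) by simp
  show "U_coloring t b (Base j (f j)) \<noteq> U_coloring t b (Act f)" if "j \<in> {1..t}" for j
  proof -
    have "b j (f j) \<in> (\<lambda>j. b j (f j)) ` {1..t}" using that by (rule imageI)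
    then show ?thesis using mex_notin[of "(\<lambda>j. b j (f j)) ` {1..t}"] by force
  qed
qed

lemma transversal_covering:
  assumes "finite C" "card C \<le> s" "\<forall>j\<in>{1..s}. D j \<noteq> {}" "\<forall>j\<in>{1..s}. card (C - D j) < j"
  shows "\<exists>g. (\<forall>j\<in>{1..s}. g j \<in> D j) \<and> C \<subseteq> g ` {1..s}"
  using assms
proof (induction s arbitrary: C)
  case 0
  then show ?case by auto
next
  case (Suc s)
  have image_upd: "(g(Suc s := a)) ` {1..Suc s} = insert a (g ` {1..s})" for g a
    by (auto simp: atLeastAtMostSuc_conv image_iff)
  show ?case
  proof (cases "card C \<le> s")
    case True
    then obtain g where g: "\<forall>j\<in>{1..s}. g j \<in> D j" "C \<subseteq> g ` {1..s}"
      using Suc.IH[of C] Suc.prems by auto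
    obtain a where "a \<in> D (Suc s)" using Suc.prems(3) by fastforce
    then show ?thesis
      using g by (intro exI[of _ "g(Suc s := a)"]) (auto simp: image_upd)
  next
    case False
    then have card_C: "card C = Suc s" using Suc.prems(2) by simp
    have "card (C - D (Suc s)) < card C" using Suc.prems(4) card_C by simp
    then have "C - D (Suc s) \<noteq> C" by auto
    then obtain a where a: "a \<in> C" "a \<in> D (Suc s)" by blast
    have "card (C - {a} - D j) < j" if "j \<in> {1..s}" for j
    proof -
      have "card (C - {a} - D j) \<le> card (C - D j)"
        using Suc.prems(1) by (intro card_mono) auto
      moreover have "card (C - D j) < j" using Suc.prems(4) that by simp
      ultimately show ?thesis by linarith
    qed
    then obtain g where g: "\<forall>j\<in>{1..s}. g j \<in> D j" "C - {a} \<subseteq> g ` {1..s}"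
      using Suc.IH[of "C - {a}"] Suc.prems a card_C by auto
    then show ?thesis
      using a by (intro exI[of _ "g(Suc s := a)"]) (auto simp: image_upd)
  qed
qed

lemma pinned_staircase_colorings:
  assumes k: "t + 2 \<le> k"
    and S: "\<forall>j\<in>{1..t}. critical (S j) (k - j) \<and> no_isolated (S j)"
    and h: "h \<in> active_tuples t S"
  obtains b where "\<forall>j\<in>{1..t}. proper_coloring (S j) (k - 1) (b j)"
    and "\<forall>j\<in>{1..t}. \<forall>v\<in>verts (S j). j - 1 \<le> b j v \<and> (b j v = j - 1 \<longleftrightarrow> v = h j)"
proof -
  have "\<exists>d. proper_coloring (S j) (k - 1) d \<and> (\<forall>v\<in>verts (S j). j - 1 \<le> d v \<and> (d v = j - 1 \<longleftrightarrow> v = h j))"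
    if j: "j \<in> {1..t}" for j
  proof -
    have "critical (S j) (k - j)" "no_isolated (S j)" using S j by auto
    then obtain d where d: "proper_coloring (S j) (k - j) d" "\<forall>w\<in>verts (S j). d w = 0 \<longleftrightarrow> w = h j"
      using active_tuple_in_verts[OF h j] by (rule critical_coloring_pinned)
    have "k - j + (j - 1) = k - 1" using j k by auto
    then have "proper_coloring (S j) (k - 1) (\<lambda>v. d v + (j - 1))"
      using proper_coloring_shift[OF d(1)] by metis
    with d(2) show ?thesis by (intro exI[of _ "\<lambda>v. d v + (j - 1)"]) auto
  qed
  then show thesis using that by metis
qed

lemma U_coloring_pinned_Act_self:
  assumes "\<forall>j\<in>{1..t}. \<forall>v\<in>verts (S j). j - 1 \<le> b j v \<and> (b j v = j - 1 \<longleftrightarrow> v = h j)"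
    and "h \<in> active_tuples t S"
  shows "U_coloring t b (Act h) = t"
proof -
  have "\<forall>j\<in>{1..t}. b j (h j) = j - 1"
    using assms active_tuple_in_verts[OF assms(2)] by blast
  then show ?thesis using mex_staircase_eq[of t "\<lambda>j. b j (h j)"] by simp
qed

lemma U_coloring_pinned_Act_less:
  assumes pinned: "\<forall>j\<in>{1..t}. \<forall>v\<in>verts (S j). j - 1 \<le> b j v \<and> (b j v = j - 1 \<longleftrightarrow> v = h j)"
    and h: "h \<in> active_tuples t S" and f: "f \<in> active_tuples t S" "f \<noteq> h"
  shows "U_coloring t b (Act f) < t"
proof -
  obtain j where j: "j \<in> {1..t}" "f j \<noteq> h j"
    using f h PiE_ext[of f "{1..t}" "\<lambda>j. verts (S j)" h] unfolding active_tuples_def by blast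
  have "\<forall>j\<in>{1..t}. j - 1 \<le> b j (f j)"
    using pinned active_tuple_in_verts[OF f(1)] by blast
  moreover have "b j (f j) \<noteq> j - 1" using pinned active_tuple_in_verts[OF f(1) j(1)] j by blast
  ultimately show ?thesis using mex_staircase_less[of t "\<lambda>j. b j (f j)"] j(1) by simp
qed

lemma U_graph_coloring_isolating_active:
  assumes k: "t + 2 \<le> k"
    and S: "\<forall>j\<in>{1..t}. critical (S j) (k - j) \<and> no_isolated (S j)"
    and u: "u \<in> U_active t S"
  shows "\<exists>c. proper_coloring (U_graph t S) (k - 1) c \<and> card (c ` U_active t S) \<le> t + 1 \<and>
           (\<forall>w\<in>U_active t S. w \<noteq> u \<longrightarrow> c w \<noteq> c u)"
proof -
  obtain h where h: "h \<in> active_tuples t S" "u = Act h" using u by (auto simp: U_active_def)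
  obtain b where b: "\<forall>j\<in>{1..t}. proper_coloring (S j) (k - 1) (b j)"
    and b_pinned: "\<forall>j\<in>{1..t}. \<forall>v\<in>verts (S j). j - 1 \<le> b j v \<and> (b j v = j - 1 \<longleftrightarrow> v = h j)"
    using pinned_staircase_colorings[OF k S h(1)] by blast
  let ?c = "U_coloring t b"
  have proper: "proper_coloring (U_graph t S) (k - 1) ?c"
    using k b b_pinned by (intro proper_coloring_U_coloring) auto
  have color_u: "?c u = t"
    using U_coloring_pinned_Act_self[OF b_pinned h(1)] h(2) by simp
  have color_other: "?c (Act f) < t" if "f \<in> active_tuples t S" "f \<noteq> h" for f
    using U_coloring_pinned_Act_less[OF b_pinned h(1) that] .
  have "?c ` U_active t S \<subseteq> {..t}"
    using color_u color_other h by (force simp: U_active_def)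
  then have "card (?c ` U_active t S) \<le> t + 1"
    using card_mono[of "{..t}"] by fastforce
  moreover have "\<forall>w\<in>U_active t S. w \<noteq> u \<longrightarrow> ?c w \<noteq> ?c u"
    using color_u color_other h by (force simp: U_active_def)
  ultimately show ?thesis using proper by blast
qed

lemma U_graph_active_colors_ge:
  assumes k: "t + 2 \<le> k"
    and S: "\<forall>j\<in>{1..t}. is_graph (S j) \<and> critical (S j) (k - j)"
    and c: "proper_coloring (U_graph t S) (k - 1) c"
  shows "t + 1 \<le> card (c ` U_active t S)"
proof (rule ccontr)
  let ?C = "c ` U_active t S"
  define D where "D j = (\<lambda>v. c (Base j v)) ` verts (S j)" for j
  assume "\<not> t + 1 \<le> card ?C"
  then have card_C: "card ?C \<le> t" by simp
  have comp: "\<forall>j\<in>{1..t}. proper_coloring (S j) (k - 1) (\<lambda>v. c (Base j v))"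
    and act: "\<forall>f\<in>active_tuples t S. c (Act f) < k - 1 \<and> (\<forall>j\<in>{1..t}. c (Base j (f j)) \<noteq> c (Act f))"
    using c unfolding proper_coloring_U_graph_iff by auto
  have C_sub: "?C \<subseteq> {..<k - 1}" using act by (auto simp: U_active_def)
  have D_sub: "D j \<subseteq> {..<k - 1}" if "j \<in> {1..t}" for j
    using comp that by (auto simp: D_def proper_coloring_def)
  have card_D: "k - j \<le> card (D j)" if "j \<in> {1..t}" for j
    using chromatic_number_le_card_image[of "S j" "k - 1" "\<lambda>v. c (Base j v)"] comp S that
    by (auto simp: D_def critical_def)
  have "\<exists>g. (\<forall>j\<in>{1..t}. g j \<in> D j) \<and> ?C \<subseteq> g ` {1..t}"
  proof (rule transversal_covering)
    show "finite ?C" using C_sub finite_subset by blast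
    show "card ?C \<le> t" by (fact card_C)
    show "\<forall>j\<in>{1..t}. D j \<noteq> {}"
    proof
      fix j assume j: "j \<in> {1..t}"
      then have "0 < card (D j)" using card_D[OF j] k by auto
      then show "D j \<noteq> {}" by auto
    qed
    show "\<forall>j\<in>{1..t}. card (?C - D j) < j"
    proof
      fix j assume j: "j \<in> {1..t}"
      have "card (?C - D j) \<le> card ({..<k - 1} - D j)"
        using C_sub by (intro card_mono) auto
      also have "\<dots> = k - 1 - card (D j)"
        using D_sub[OF j] by (simp add: card_Diff_subset finite_subset)
      finally show "card (?C - D j) < j" using card_D[OF j] j k by auto
    qed
  qed
  then obtain g where g: "\<forall>j\<in>{1..t}. g j \<in> D j" "?C \<subseteq> g ` {1..t}" by blast
  have "\<forall>j\<in>{1..t}. \<exists>v\<in>verts (S j). c (Base j v) = g j" using g(1) unfolding D_def by (metis imageE)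
  then obtain F where F: "\<forall>j\<in>{1..t}. F j \<in> verts (S j) \<and> c (Base j (F j)) = g j" by metis
  define f where "f = restrict F {1..t}"
  have f: "f \<in> active_tuples t S" using F by (auto simp: f_def active_tuples_def)
  then have "c (Act f) \<in> ?C" by (auto simp: U_active_def)
  then obtain j where j: "j \<in> {1..t}" "c (Act f) = g j" using g(2) by auto
  then have "c (Base j (f j)) = c (Act f)" using F by (simp add: f_def)
  then show False using act f j(1) by blast
qed

lemma U_graph_delete_base_edge_coloring:
  assumes k: "t + 2 \<le> k"
    and S: "\<forall>j\<in>{1..t}. is_graph (S j) \<and> critical (S j) (k - j)"
    and m: "m \<in> {1..t}" "{x, y} \<in> edges (S m)"
  shows "\<exists>c. proper_coloring (delete_edge (U_graph t S) {Base m x, Base m y}) (k - 1) c \<and>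
             c ` U_active t S \<subseteq> {..<t}"
proof -
  define S' where "S' = S(m := delete_edge (S m) {x, y})"
  have verts_S': "verts (S' j) = verts (S j)" for j
    by (simp add: S'_def delete_edge_def verts_def)
  have "\<exists>d. proper_coloring (S' j) (k - 1) d \<and> (\<forall>v\<in>verts (S j). (if j = m then m else j - 1) \<le> d v)"
    if j: "j \<in> {1..t}" for j
  proof (cases "j = m")
    case True
    have "colorable (delete_edge (S m) {x, y}) (k - m - 1)"
      using S m by (simp add: critical_def)
    then obtain d where "proper_coloring (S' j) (k - m - 1) d"
      using True by (auto simp: S'_def colorable_def)
    moreover have "k - m - 1 + m = k - 1" using m k by auto
    ultimately have "proper_coloring (S' j) (k - 1) (\<lambda>v. d v + m)"
      using proper_coloring_shift by metis
    then show ?thesis using True by (intro exI[of _ "\<lambda>v. d v + m"]) auto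
  next
    case False
    have "colorable (S j) (k - j)" using critical_colorable S j by blast
    then obtain d where "proper_coloring (S' j) (k - j) d"
      using False by (auto simp: S'_def colorable_def)
    moreover have "k - j + (j - 1) = k - 1" using j k by auto
    ultimately have "proper_coloring (S' j) (k - 1) (\<lambda>v. d v + (j - 1))"
      using proper_coloring_shift by metis
    then show ?thesis using False by (intro exI[of _ "\<lambda>v. d v + (j - 1)"]) auto
  qed
  then obtain b where b: "\<forall>j\<in>{1..t}. proper_coloring (S' j) (k - 1) (b j)"
    and b_low: "\<forall>j\<in>{1..t}. \<forall>v\<in>verts (S j). (if j = m then m else j - 1) \<le> b j v"
    by metis
  have stair: "\<forall>j\<in>{1..t}. \<forall>v\<in>verts (S j). j - 1 \<le> b j v"
    using b_low by (fastforce split: if_splits)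
  have "proper_coloring (U_graph t S') (k - 1) (U_coloring t b)"
    using k b stair verts_S' by (intro proper_coloring_U_coloring) auto
  then have proper: "proper_coloring (delete_edge (U_graph t S) {Base m x, Base m y}) (k - 1) (U_coloring t b)"
    by (simp add: S'_def delete_edge_U_graph_Base_edge)
  have "U_coloring t b (Act f) < t" if f: "f \<in> active_tuples t S" for f
  proof -
    have "m \<le> b m (f m)" using b_low m(1) active_tuple_in_verts[OF f m(1)] by fastforce
    then have "b m (f m) \<noteq> m - 1" using m(1) by auto
    then show ?thesis
      using mex_staircase_less[of t "\<lambda>j. b j (f j)" m] stair active_tuple_in_verts[OF f] m(1) by auto
  qed
  then have "U_coloring t b ` U_active t S \<subseteq> {..<t}" by (auto simp: U_active_def)
  with proper show ?thesis by blast
qed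

lemma U_graph_delete_active_edge_coloring:
  assumes k: "t + 2 \<le> k"
    and S: "\<forall>j\<in>{1..t}. critical (S j) (k - j) \<and> no_isolated (S j)"
    and m: "m \<in> {1..t}" and h: "h \<in> active_tuples t S"
  shows "\<exists>c. proper_coloring (delete_edge (U_graph t S) {Base m (h m), Act h}) (k - 1) c \<and>
             c ` U_active t S \<subseteq> {..<t}"
proof -
  let ?e = "{Base m (h m), Act h}"
  obtain b where b: "\<forall>j\<in>{1..t}. proper_coloring (S j) (k - 1) (b j)"
    and b_pinned: "\<forall>j\<in>{1..t}. \<forall>v\<in>verts (S j). j - 1 \<le> b j v \<and> (b j v = j - 1 \<longleftrightarrow> v = h j)"
    using pinned_staircase_colorings[OF k S h] by blast
  define c where "c = (U_coloring t b)(Act h := m - 1)"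
  have proper: "proper_coloring (delete_edge (U_graph t S) ?e) (k - 1) c"
    unfolding c_def
  proof (rule proper_coloring_update)
    show "proper_coloring (delete_edge (U_graph t S) ?e) (k - 1) (U_coloring t b)"
      using k b b_pinned by (intro proper_coloring_delete_edge proper_coloring_U_coloring) auto
    show "m - 1 < k - 1" using m k by auto
  next
    fix y assume y: "{Act h, y} \<in> edges (delete_edge (U_graph t S) ?e)"
    then obtain j where j: "j \<in> {1..t}" "y = Base j (h j)"
      using U_graph_Act_neighbour by (fastforce simp: delete_edge_def edges_def)
    have "j \<noteq> m" using y j by (auto simp: delete_edge_def edges_def insert_commute)
    moreover have "b j (h j) = j - 1"
      using b_pinned active_tuple_in_verts[OF h j(1)] j(1) by blast
    ultimately show "U_coloring t b y \<noteq> m - 1"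
      using j m by auto
  qed
  have "c (Act f) < t" if "f \<in> active_tuples t S" for f
    using U_coloring_pinned_Act_less[OF b_pinned h that] m by (cases "f = h") (auto simp: c_def)
  then have "c ` U_active t S \<subseteq> {..<t}" by (auto simp: U_active_def)
  with proper show ?thesis by blast
qed

lemma U_graph_delete_edge_coloring:
  assumes k: "t + 2 \<le> k"
    and S: "\<forall>j\<in>{1..t}. is_graph (S j) \<and> critical (S j) (k - j) \<and> no_isolated (S j)"
    and e: "e \<in> edges (U_graph t S)"
  shows "\<exists>c. proper_coloring (delete_edge (U_graph t S) e) (k - 1) c \<and> card (c ` U_active t S) \<le> t"
proof -
  have "\<exists>c. proper_coloring (delete_edge (U_graph t S) e) (k - 1) c \<and> c ` U_active t S \<subseteq> {..<t}"
  proof -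
    from e consider (base) m x y where "m \<in> {1..t}" "{x, y} \<in> edges (S m)" "e = {Base m x, Base m y}"
      | (act) m h where "m \<in> {1..t}" "h \<in> active_tuples t S" "e = {Base m (h m), Act h}"
      unfolding U_graph_def edges_def snd_conv Un_iff mem_Collect_eq by blast
    then show ?thesis
    proof cases
      case base
      have "\<forall>j\<in>{1..t}. is_graph (S j) \<and> critical (S j) (k - j)" using S by blast
      from U_graph_delete_base_edge_coloring[OF k this base(1,2)] show ?thesis unfolding base(3) .
    next
      case act
      have "\<forall>j\<in>{1..t}. critical (S j) (k - j) \<and> no_isolated (S j)" using S by blast
      from U_graph_delete_active_edge_coloring[OF k this act(1,2)] show ?thesis unfolding act(3) .
    qed
  qed
  then obtain c where "proper_coloring (delete_edge (U_graph t S) e) (k - 1) c" "c ` U_active t S \<subseteq> {..<t}"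
    by blast
  moreover from this(2) have "card (c ` U_active t S) \<le> t"
    using card_mono[of "{..<t}"] by fastforce
  ultimately show ?thesis by blast
qed

theorem lemma1:
  fixes k i :: nat and S :: "nat \<Rightarrow> 'a graph"
  assumes "k \<ge> 2" and "1 \<le> i" and "i \<le> k - 1"
    and "\<And>j. 1 \<le> j \<Longrightarrow> j \<le> i - 1 \<Longrightarrow>
            is_graph (S j) \<and> triangle_free (S j) \<and> critical (S j) (k - j) \<and> no_isolated (S j)"
  shows "(\<forall>u\<in>U_active (i - 1) S. \<exists>c. proper_coloring (U_graph (i - 1) S) (k - 1) c \<and>
            card (c ` U_active (i - 1) S) \<le> i \<and>
            (\<forall>w\<in>U_active (i - 1) S. w \<noteq> u \<longrightarrow> c w \<noteq> c u))
       \<and> (\<forall>c. proper_coloring (U_graph (i - 1) S) (k - 1) c \<longrightarrow>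
            i \<le> card (c ` U_active (i - 1) S))
       \<and> (\<forall>e\<in>edges (U_graph (i - 1) S). \<exists>c.
            proper_coloring (delete_edge (U_graph (i - 1) S) e) (k - 1) c \<and>
            card (c ` U_active (i - 1) S) \<le> i - 1)"
proof -
  obtain t where i: "i = t + 1" using assms(2) by (metis le_add_diff_inverse2)
  have k: "t + 2 \<le> k" using assms(3) i by simp
  have S: "\<forall>j\<in>{1..t}. is_graph (S j) \<and> critical (S j) (k - j) \<and> no_isolated (S j)"
    using assms(4) i by auto
  have S_crit: "\<forall>j\<in>{1..t}. critical (S j) (k - j) \<and> no_isolated (S j)"
    and S_graph: "\<forall>j\<in>{1..t}. is_graph (S j) \<and> critical (S j) (k - j)"
    using S by auto
  show ?thesis
    unfolding i add_diff_cancel_right'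
    by (intro conjI ballI allI impI U_graph_coloring_isolating_active[OF k S_crit]
        U_graph_active_colors_ge[OF k S_graph] U_graph_delete_edge_coloring[OF k S])
qed

end
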